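(* Observe $\mathbf y=\mathbf f+\boldsymbol\xi\in\mathbf R^n$, where the random vector $\boldsymbol\xi$ satisfies $\mathbb E\exp(\alpha^T\boldsymbol\xi)\le\exp(\|\alpha\|_2^2K^2/2)$ for all $\alpha\in\mathbf R^n$, and $K>0$ is the smallest positive number with this property. Let $M\ge2$ and, for $j=1,\dots,M$, let $\mathbf b_j\in\mathbf R^n$ and let $A_j$ be an $n\times n$ matrix with $A_j=A_j^T=A_j^2$ (both deterministic); $\hat{\boldsymbol\mu}_j=A_j\mathbf y+\mathbf b_j$. Let $(\pi_1,\dots,\pi_M)\in\Lambda^M$ with $\mathrm{Tr}(A_j)\le\log(\pi_j^{-1})$ for all $j$. Let $\hat K>0$ be a given estimator, $\delta:=\mathbb P(\hat K^2<K^2)$, and let $\hat{\boldsymbol\theta}\in\arg\min_{\boldsymbol\theta\in\Lambda^M}U(\boldsymbol\theta)$. Then for all $x>0$, with probability at least $1-\delta-2e^{-x}$, \[\|\hat{\boldsymbol\mu}_{\hat{\boldsymbol\theta}}-\mathbf f\|_2^2\le\min_{j=1,\dots,M}\Big(\|\hat{\boldsymbol\mu}_j-\mathbf f\|_2^2+64\hat K^2\log\frac1{\pi_j}\Big)+28K^2x.\]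
   Context: $\Lambda^M=\{\boldsymbol\theta\in\mathbf R^M:\sum_j\theta_j=1,\theta_j\ge0\}$. For $\boldsymbol\theta\in\Lambda^M$: $A_{\boldsymbol\theta}=\sum_j\theta_jA_j$, $\mathbf b_{\boldsymbol\theta}=\sum_j\theta_j\mathbf b_j$, $\hat{\boldsymbol\mu}_{\boldsymbol\theta}=A_{\boldsymbol\theta}\mathbf y+\mathbf b_{\boldsymbol\theta}$, $\mathrm{pen}(\boldsymbol\theta)=\sum_j\theta_j\|\hat{\boldsymbol\mu}_{\boldsymbol\theta}-\hat{\boldsymbol\mu}_j\|_2^2$, and $U(\boldsymbol\theta)=\|\hat{\boldsymbol\mu}_{\boldsymbol\theta}\|_2^2-2\mathbf y^T\hat{\boldsymbol\mu}_{\boldsymbol\theta}+\frac12\mathrm{pen}(\boldsymbol\theta)+32\hat K^2\sum_{j=1}^M\theta_j\log\frac1{\pi_j}$. *)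

theory Defs
  imports "HOL-Probability.Probability"
begin

definition Lsimplex :: "nat \<Rightarrow> (nat \<Rightarrow> real) set" where
  "Lsimplex M = {\<theta>. (\<forall>j\<in>{1..M}. 0 \<le> \<theta> j) \<and> (\<Sum>j=1..M. \<theta> j) = 1}"

definition A_theta :: "nat \<Rightarrow> (nat \<Rightarrow> real^'n^'n) \<Rightarrow> (nat \<Rightarrow> real) \<Rightarrow> real^'n^'n" where
  "A_theta M A \<theta> = (\<Sum>j=1..M. \<theta> j *\<^sub>R A j)"

definition b_theta :: "nat \<Rightarrow> (nat \<Rightarrow> real^'n) \<Rightarrow> (nat \<Rightarrow> real) \<Rightarrow> real^'n" where
  "b_theta M b \<theta> = (\<Sum>j=1..M. \<theta> j *\<^sub>R b j)"

definition mu_hat :: "(nat \<Rightarrow> real^'n^'n) \<Rightarrow> (nat \<Rightarrow> real^'n) \<Rightarrow> real^'n \<Rightarrow> nat \<Rightarrow> real^'n" where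
  "mu_hat A b y j = A j *v y + b j"

definition mu_theta :: "nat \<Rightarrow> (nat \<Rightarrow> real^'n^'n) \<Rightarrow> (nat \<Rightarrow> real^'n) \<Rightarrow> real^'n \<Rightarrow> (nat \<Rightarrow> real) \<Rightarrow> real^'n" where
  "mu_theta M A b y \<theta> = A_theta M A \<theta> *v y + b_theta M b \<theta>"

definition pen :: "nat \<Rightarrow> (nat \<Rightarrow> real^'n^'n) \<Rightarrow> (nat \<Rightarrow> real^'n) \<Rightarrow> real^'n \<Rightarrow> (nat \<Rightarrow> real) \<Rightarrow> real" where
  "pen M A b y \<theta> = (\<Sum>j=1..M. \<theta> j * (norm (mu_theta M A b y \<theta> - mu_hat A b y j))\<^sup>2)"

text \<open>The criterion U(theta); Kh is the value of the estimator hat K, log is the natural log.\<close>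
definition U :: "nat \<Rightarrow> (nat \<Rightarrow> real^'n^'n) \<Rightarrow> (nat \<Rightarrow> real^'n) \<Rightarrow> (nat \<Rightarrow> real) \<Rightarrow> real \<Rightarrow> real^'n \<Rightarrow> (nat \<Rightarrow> real) \<Rightarrow> real" where
  "U M A b \<pi> Kh y \<theta> = (norm (mu_theta M A b y \<theta>))\<^sup>2 - 2 * (y \<bullet> mu_theta M A b y \<theta>)
     + pen M A b y \<theta> / 2 + 32 * Kh\<^sup>2 * (\<Sum>j=1..M. \<theta> j * ln (1 / \<pi> j))"

text \<open>Sub-Gaussian moment-generating-function bound with parameter K
  (expectation of a nonnegative variable, taken as a Lebesgue integral in [0,\<infinity>]).\<close>
definition subgaussian :: "'a measure \<Rightarrow> ('a \<Rightarrow> real^'n) \<Rightarrow> real \<Rightarrow> bool" where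
  "subgaussian P \<xi> K \<longleftrightarrow>
     (\<forall>\<alpha>::real^'n. (\<integral>\<^sup>+ \<omega>. ennreal (exp (\<alpha> \<bullet> \<xi> \<omega>)) \<partial>P) \<le> ennreal (exp ((norm \<alpha>)\<^sup>2 * K\<^sup>2 / 2)))"

end

theory Submission
  imports Defs
begin

text \<open>
  \<open>U\<close> is half the squared norm of \<open>mu_theta\<close> plus a function linear in \<open>\<theta>\<close>, so comparing the
  minimiser \<open>\<theta>hat\<close> with a vertex \<open>e\<^sub>k\<close> along the segment between them gives
  \<open>U \<theta>hat + \<parallel>mu_hat k - mu_theta \<theta>hat\<parallel>\<^sup>2 / 2 \<le> U e\<^sub>k\<close>. Expanding both sides with \<open>y = f + \<xi>\<close>
  bounds the excess risk over \<open>mu_hat k\<close> by the \<open>\<theta>hat\<close>-average of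
  \<open>2 \<xi> \<bullet> (mu_hat j - mu_hat k) - \<parallel>mu_hat j - mu_hat k\<parallel>\<^sup>2 / 4\<close>; the penalty \<open>pen\<close> is what the
  bias--variance decomposition of this average requires. As the \<open>A j\<close> are orthogonal projections,
  each term is at most a linear functional of \<open>\<xi>\<close> plus \<open>5/2 \<parallel>A j \<xi>\<parallel>\<^sup>2\<close>. Chernoff bounds control
  both: the linear one directly by the sub-Gaussian assumption, the quadratic one after expanding
  \<open>\<parallel>A j \<xi>\<parallel>\<^sup>2\<close> in an orthonormal basis of the range of \<open>A j\<close> and decoupling each square by an
  auxiliary Gaussian, which gives \<open>E exp (\<parallel>A j \<xi>\<parallel>\<^sup>2 / (4 K\<^sup>2)) \<le> 2 ^ (trace (A j) / 2)\<close>.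
  Union bounds with weights \<open>\<pi> j\<close> and \<open>\<pi> j \<pi> k\<close> cost \<open>exp (- x)\<close> each; the remaining
  failure probability is that of \<open>Khat\<^sup>2 < K\<^sup>2\<close>.
\<close>

section \<open>Gaussian decoupling\<close>

lemma nn_integral_normal_density:
  "0 < \<sigma> \<Longrightarrow> (\<integral>\<^sup>+g. ennreal (normal_density \<mu> \<sigma> g) \<partial>lborel) = 1"
  by (subst nn_integral_eq_integral) auto

lemma nn_integral_std_normal_exp_linear:
  "(\<integral>\<^sup>+g. ennreal (std_normal_density g * exp (a * g)) \<partial>lborel) = ennreal (exp (a\<^sup>2 / 2))"
proof -
  have density: "std_normal_density g * exp (a * g) = exp (a\<^sup>2 / 2) * normal_density a 1 g" for g
  proof -
    have "exp (- g\<^sup>2 / 2) * exp (a * g) = exp (a\<^sup>2 / 2) * exp (- (g - a)\<^sup>2 / 2)"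
      unfolding exp_add[symmetric] by (rule arg_cong[where f = exp]) (simp add: power2_eq_square field_simps)
    then show ?thesis by (simp add: std_normal_density_def normal_density_def)
  qed
  have "(\<integral>\<^sup>+g. ennreal (std_normal_density g * exp (a * g)) \<partial>lborel)
      = ennreal (exp (a\<^sup>2 / 2)) * (\<integral>\<^sup>+g. ennreal (normal_density a 1 g) \<partial>lborel)"
    by (subst nn_integral_cmult[symmetric]) (auto simp: density ennreal_mult)
  then show ?thesis by (simp add: nn_integral_normal_density)
qed

lemma nn_integral_std_normal_exp_square:
  assumes "c < 1 / 2"
  shows "(\<integral>\<^sup>+g. ennreal (std_normal_density g * exp (c * g\<^sup>2)) \<partial>lborel) = ennreal (1 / sqrt (1 - 2 * c))"
proof -
  define \<sigma> where "\<sigma> = 1 / sqrt (1 - 2 * c)"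
  have pos: "1 - 2 * c > 0" using assms by simp
  then have "\<sigma> > 0" by (simp add: \<sigma>_def)
  have \<sigma>_sq: "\<sigma>\<^sup>2 = 1 / (1 - 2 * c)" using pos by (simp add: \<sigma>_def power_divide)
  have density: "std_normal_density g * exp (c * g\<^sup>2) = \<sigma> * normal_density 0 \<sigma> g" for g
  proof -
    have "exp (- g\<^sup>2 / 2) * exp (c * g\<^sup>2) = exp (- (g - 0)\<^sup>2 / (2 * \<sigma>\<^sup>2))"
      using pos by (simp add: \<sigma>_sq exp_add[symmetric] field_simps)
    moreover have "sqrt (2 * pi * \<sigma>\<^sup>2) = sqrt (2 * pi) * \<sigma>"
      using pos by (simp add: real_sqrt_mult \<sigma>_def)
    ultimately show ?thesis
      using pos by (simp add: std_normal_density_def normal_density_def \<sigma>_def field_simps)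
  qed
  have "(\<integral>\<^sup>+g. ennreal (std_normal_density g * exp (c * g\<^sup>2)) \<partial>lborel)
      = ennreal \<sigma> * (\<integral>\<^sup>+g. ennreal (normal_density 0 \<sigma> g) \<partial>lborel)"
    using \<open>\<sigma> > 0\<close> by (subst nn_integral_cmult[symmetric]) (auto simp: density ennreal_mult)
  then show ?thesis using \<open>\<sigma> > 0\<close> by (simp add: nn_integral_normal_density \<sigma>_def)
qed

text \<open>Hubbard--Stratonovich: averaging over a standard Gaussian \<open>g\<close> turns the quadratic exponent
  \<open>l X\<^sup>2\<close> into the linear exponent \<open>sqrt (2 l) g X\<close>.\<close>
lemma nn_integral_exp_square_decoupling:
  fixes X F :: "'a \<Rightarrow> real"
  assumes P: "sigma_finite_measure P" and [measurable]: "X \<in> borel_measurable P" "F \<in> borel_measurable P"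
    and "0 \<le> l"
  shows "(\<integral>\<^sup>+\<omega>. ennreal (exp (l * (X \<omega>)\<^sup>2 + F \<omega>)) \<partial>P)
    = (\<integral>\<^sup>+g. ennreal (std_normal_density g) * (\<integral>\<^sup>+\<omega>. ennreal (exp (F \<omega> + sqrt (2 * l) * g * X \<omega>)) \<partial>P) \<partial>lborel)"
proof -
  interpret pair_sigma_finite P lborel
    by (simp add: pair_sigma_finite_def P lborel.sigma_finite_measure_axioms)
  define c where "c = sqrt (2 * l)"
  have c_sq: "c\<^sup>2 = 2 * l" using \<open>0 \<le> l\<close> by (simp add: c_def)
  have pointwise: "ennreal (exp (l * (X \<omega>)\<^sup>2 + F \<omega>))
      = (\<integral>\<^sup>+g. ennreal (std_normal_density g * exp (F \<omega> + c * g * X \<omega>)) \<partial>lborel)" for \<omega>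
  proof -
    have "(\<integral>\<^sup>+g. ennreal (std_normal_density g * exp (F \<omega> + c * g * X \<omega>)) \<partial>lborel)
        = ennreal (exp (F \<omega>)) * (\<integral>\<^sup>+g. ennreal (std_normal_density g * exp ((c * X \<omega>) * g)) \<partial>lborel)"
      by (subst nn_integral_cmult[symmetric]) (auto simp: ennreal_mult[symmetric] exp_add algebra_simps)
    also have "\<dots> = ennreal (exp (l * (X \<omega>)\<^sup>2 + F \<omega>))"
      unfolding nn_integral_std_normal_exp_linear
      by (simp add: ennreal_mult[symmetric] exp_add[symmetric] power_mult_distrib c_sq algebra_simps)
    finally show ?thesis ..
  qed
  have "(\<integral>\<^sup>+\<omega>. ennreal (exp (l * (X \<omega>)\<^sup>2 + F \<omega>)) \<partial>P)
      = (\<integral>\<^sup>+g. (\<integral>\<^sup>+\<omega>. ennreal (std_normal_density g * exp (F \<omega> + c * g * X \<omega>)) \<partial>P) \<partial>lborel)"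
    unfolding pointwise by (rule Fubini'[symmetric]) measurable
  also have "\<dots> = (\<integral>\<^sup>+g. ennreal (std_normal_density g) * (\<integral>\<^sup>+\<omega>. ennreal (exp (F \<omega> + c * g * X \<omega>)) \<partial>P) \<partial>lborel)"
    by (intro nn_integral_cong, subst nn_integral_cmult[symmetric]) (auto simp: ennreal_mult)
  finally show ?thesis unfolding c_def .
qed

lemma subgaussian_nn_integral_exp_sum_squares:
  fixes \<xi> :: "'a \<Rightarrow> real^'n" and B :: "(real^'n) set"
  assumes P: "prob_space P" and [measurable]: "\<xi> \<in> borel_measurable P" and sg: "subgaussian P \<xi> K"
    and "0 \<le> l" and "2 * l * K\<^sup>2 < 1"
  shows "finite B \<Longrightarrow> pairwise orthogonal B \<Longrightarrow> (\<forall>u\<in>B. norm u = 1) \<Longrightarrow> (\<forall>u\<in>B. orthogonal u w) \<Longrightarrow>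
    (\<integral>\<^sup>+\<omega>. ennreal (exp (l * (\<Sum>u\<in>B. (u \<bullet> \<xi> \<omega>)\<^sup>2) + w \<bullet> \<xi> \<omega>)) \<partial>P)
      \<le> ennreal ((1 / sqrt (1 - 2 * l * K\<^sup>2)) ^ card B * exp (K\<^sup>2 * (norm w)\<^sup>2 / 2))"
proof (induction B arbitrary: w rule: finite_induct)
  case empty
  then show ?case using sg unfolding subgaussian_def by (simp add: mult.commute)
next
  case (insert u B)
  interpret prob_space P by (rule P)
  define C where "C = 1 / sqrt (1 - 2 * l * K\<^sup>2)"
  have "C \<ge> 0" unfolding C_def using \<open>2 * l * K\<^sup>2 < 1\<close> by simp
  define c where "c = sqrt (2 * l)"
  have [measurable]: "(\<lambda>\<omega>. \<Sum>v\<in>B. (v \<bullet> \<xi> \<omega>)\<^sup>2) \<in> borel_measurable P" by measurable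
  have shifted: "ennreal (std_normal_density g) *
      (\<integral>\<^sup>+\<omega>. ennreal (exp (l * (\<Sum>v\<in>B. (v \<bullet> \<xi> \<omega>)\<^sup>2) + w \<bullet> \<xi> \<omega> + c * g * (u \<bullet> \<xi> \<omega>))) \<partial>P)
    \<le> ennreal (C ^ card B * exp (K\<^sup>2 * (norm w)\<^sup>2 / 2)) * ennreal (std_normal_density g * exp (l * K\<^sup>2 * g\<^sup>2))"
    for g
  proof -
    have orth: "\<forall>v\<in>B. orthogonal v (w + (c * g) *\<^sub>R u)"
      using insert.prems insert.hyps
      by (auto simp: pairwise_insert orthogonal_def inner_add_right inner_commute)
    have "u \<bullet> u = 1" "u \<bullet> w = 0" "c\<^sup>2 = 2 * l"
      using insert.prems \<open>0 \<le> l\<close> by (auto simp: dot_square_norm orthogonal_def c_def)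
    then have norm_shift: "(norm (w + (c * g) *\<^sub>R u))\<^sup>2 = (norm w)\<^sup>2 + 2 * l * g\<^sup>2"
      unfolding power2_norm_eq_inner
      by (simp add: inner_add_left inner_add_right inner_commute algebra_simps)
        (metis mult.assoc power2_eq_square)
    have "(\<integral>\<^sup>+\<omega>. ennreal (exp (l * (\<Sum>v\<in>B. (v \<bullet> \<xi> \<omega>)\<^sup>2) + (w + (c * g) *\<^sub>R u) \<bullet> \<xi> \<omega>)) \<partial>P)
        \<le> ennreal (C ^ card B * exp (K\<^sup>2 * (norm (w + (c * g) *\<^sub>R u))\<^sup>2 / 2))"
      unfolding C_def using insert.prems orth by (intro insert.IH) (auto simp: pairwise_insert)
    then have "(\<integral>\<^sup>+\<omega>. ennreal (exp (l * (\<Sum>v\<in>B. (v \<bullet> \<xi> \<omega>)\<^sup>2) + w \<bullet> \<xi> \<omega> + c * g * (u \<bullet> \<xi> \<omega>))) \<partial>P)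
        \<le> ennreal (C ^ card B * exp (K\<^sup>2 * (norm w)\<^sup>2 / 2) * exp (l * K\<^sup>2 * g\<^sup>2))"
      by (simp add: norm_shift inner_add_left mult.assoc add.assoc exp_add[symmetric] algebra_simps add_divide_distrib)
    then have "ennreal (std_normal_density g) *
        (\<integral>\<^sup>+\<omega>. ennreal (exp (l * (\<Sum>v\<in>B. (v \<bullet> \<xi> \<omega>)\<^sup>2) + w \<bullet> \<xi> \<omega> + c * g * (u \<bullet> \<xi> \<omega>))) \<partial>P)
      \<le> ennreal (std_normal_density g) * ennreal (C ^ card B * exp (K\<^sup>2 * (norm w)\<^sup>2 / 2) * exp (l * K\<^sup>2 * g\<^sup>2))"
      by (rule mult_left_mono) simp
    then show ?thesis using \<open>C \<ge> 0\<close> by (simp add: ennreal_mult[symmetric] mult_ac)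
  qed
  have "(\<integral>\<^sup>+\<omega>. ennreal (exp (l * (\<Sum>v\<in>insert u B. (v \<bullet> \<xi> \<omega>)\<^sup>2) + w \<bullet> \<xi> \<omega>)) \<partial>P)
      = (\<integral>\<^sup>+\<omega>. ennreal (exp (l * (u \<bullet> \<xi> \<omega>)\<^sup>2 + (l * (\<Sum>v\<in>B. (v \<bullet> \<xi> \<omega>)\<^sup>2) + w \<bullet> \<xi> \<omega>))) \<partial>P)"
    using insert.hyps by (simp add: algebra_simps)
  also have "\<dots> = (\<integral>\<^sup>+g. ennreal (std_normal_density g) *
      (\<integral>\<^sup>+\<omega>. ennreal (exp (l * (\<Sum>v\<in>B. (v \<bullet> \<xi> \<omega>)\<^sup>2) + w \<bullet> \<xi> \<omega> + c * g * (u \<bullet> \<xi> \<omega>))) \<partial>P) \<partial>lborel)"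
    unfolding c_def
    by (rule nn_integral_exp_square_decoupling) (use \<open>0 \<le> l\<close> in \<open>auto intro: sigma_finite_measure\<close>)
  also have "\<dots> \<le> (\<integral>\<^sup>+g. ennreal (C ^ card B * exp (K\<^sup>2 * (norm w)\<^sup>2 / 2)) *
      ennreal (std_normal_density g * exp (l * K\<^sup>2 * g\<^sup>2)) \<partial>lborel)"
    by (intro nn_integral_mono shifted)
  also have "\<dots> = ennreal (C ^ card B * exp (K\<^sup>2 * (norm w)\<^sup>2 / 2)) * ennreal C"
    using nn_integral_std_normal_exp_square[of "l * K\<^sup>2"] \<open>2 * l * K\<^sup>2 < 1\<close>
    by (subst nn_integral_cmult) (auto simp: C_def mult.assoc)
  also have "\<dots> = ennreal (C ^ card (insert u B) * exp (K\<^sup>2 * (norm w)\<^sup>2 / 2))"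
    using insert.hyps \<open>C \<ge> 0\<close> by (simp add: ennreal_mult[symmetric] algebra_simps)
  finally show ?case unfolding C_def .
qed

section \<open>Orthogonal projections\<close>

lemma inner_matrix_vector_symmetric:
  fixes A :: "real^'n^'n"
  assumes "transpose A = A"
  shows "(A *v x) \<bullet> y = x \<bullet> (A *v y)"
proof -
  have "x \<bullet> adjoint ((*v) A) y = (A *v x) \<bullet> y"
    by (rule adjoint_works) (simp add: matrix_vector_mul_linear)
  then show ?thesis using assms by (simp add: adjoint_matrix)
qed

lemma inner_projection_matrix:
  fixes A :: "real^'n^'n"
  assumes "transpose A = A" "A ** A = A"
  shows "z \<bullet> (A *v z) = (norm (A *v z))\<^sup>2"
proof -
  have "(A *v z) \<bullet> (A *v z) = z \<bullet> (A *v (A *v z))" by (rule inner_matrix_vector_symmetric[OF assms(1)])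
  also have "\<dots> = z \<bullet> (A *v z)" using assms(2) by (simp add: matrix_vector_mul_assoc)
  finally show ?thesis by (simp add: power2_norm_eq_inner)
qed

lemma projection_matrix_orthonormal_expansion:
  fixes A :: "real^'n^'n"
  assumes sym: "transpose A = A" and idem: "A ** A = A"
  obtains B where "finite B" "pairwise orthogonal B" "\<forall>u\<in>B. norm u = 1"
    "\<And>z. A *v z = (\<Sum>u\<in>B. (u \<bullet> z) *\<^sub>R u)"
proof -
  define S where "S = range (\<lambda>z. A *v z)"
  have "subspace S" unfolding S_def
    by (rule linear_subspace_image[OF matrix_vector_mul_linear subspace_UNIV])
  then obtain B where "B \<subseteq> S" and orth: "pairwise orthogonal B"
    and unit: "\<And>u. u \<in> B \<Longrightarrow> norm u = 1" and "independent B" and span_B: "span B = S"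
    using orthonormal_basis_subspace by metis
  have "finite B" using \<open>independent B\<close> by (rule independent_imp_finite)
  have fixed: "A *v v = v" if "v \<in> S" for v
    using that idem unfolding S_def by (auto simp: matrix_vector_mul_assoc)
  have coeff: "v \<bullet> (\<Sum>u\<in>B. (u \<bullet> z) *\<^sub>R u) = v \<bullet> z" if "v \<in> B" for v z
  proof -
    have "v \<bullet> (\<Sum>u\<in>B. (u \<bullet> z) *\<^sub>R u) = (\<Sum>u\<in>{v}. (u \<bullet> z) * (v \<bullet> u))"
      unfolding inner_sum_right inner_scaleR_right using that \<open>finite B\<close> orth
      by (intro sum.mono_neutral_right) (auto simp: pairwise_def orthogonal_def inner_commute)
    then show ?thesis using unit[OF that] by (simp add: dot_square_norm)
  qed
  have "A *v z = (\<Sum>u\<in>B. (u \<bullet> z) *\<^sub>R u)" for z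
  proof -
    define d where "d = A *v z - (\<Sum>u\<in>B. (u \<bullet> z) *\<^sub>R u)"
    have "A *v z \<in> span B" using span_B by (simp add: S_def)
    moreover have "(\<Sum>u\<in>B. (u \<bullet> z) *\<^sub>R u) \<in> span B" by (intro span_sum span_scale span_base)
    ultimately have "d \<in> span B" by (simp add: d_def span_diff)
    moreover have "orthogonal d v" if "v \<in> B" for v
    proof -
      have "v \<bullet> (A *v z) = (A *v v) \<bullet> z" by (simp add: inner_matrix_vector_symmetric[OF sym])
      also have "\<dots> = v \<bullet> z" using fixed \<open>B \<subseteq> S\<close> that by auto
      finally show ?thesis using coeff[OF that, of z]
        by (simp add: orthogonal_def d_def inner_diff_left inner_diff_right inner_commute[of _ v])
    qed
    ultimately have "orthogonal d d" using orthogonal_to_span by blast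
    then show ?thesis by (simp add: orthogonal_self d_def)
  qed
  then show ?thesis using that \<open>finite B\<close> orth unit by blast
qed

lemma trace_eq_card_orthonormal_expansion:
  fixes A :: "real^'n^'n"
  assumes "finite B" "\<forall>u\<in>B. norm u = 1" "\<And>z. A *v z = (\<Sum>u\<in>B. (u \<bullet> z) *\<^sub>R u)"
  shows "trace A = card B"
proof -
  have "A $ i $ i = (\<Sum>u\<in>B. (u $ i)\<^sup>2)" for i
  proof -
    have "A $ i $ i = (A *v axis i 1) $ i"
      by (simp add: matrix_vector_mult_def axis_def if_distrib cong: if_cong)
    then show ?thesis by (simp add: assms(3) inner_axis power2_eq_square)
  qed
  then have "trace A = (\<Sum>u\<in>B. \<Sum>i\<in>UNIV. (u $ i)\<^sup>2)" by (simp add: trace_def sum.swap[of _ UNIV])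
  also have "\<dots> = (\<Sum>u\<in>B. 1)"
  proof (rule sum.cong[OF refl])
    fix u assume "u \<in> B"
    then have "u \<bullet> u = 1" using assms(2) by (simp add: dot_square_norm)
    then show "(\<Sum>i\<in>UNIV. (u $ i)\<^sup>2) = 1" by (simp add: inner_vec_def power2_eq_square)
  qed
  finally show ?thesis by simp
qed

section \<open>Deviation bounds for sub-Gaussian noise\<close>

lemma emeasure_pos_le_nn_integral_exp:
  fixes f :: "'a \<Rightarrow> real"
  assumes [measurable]: "f \<in> borel_measurable P"
  shows "emeasure P {\<omega>\<in>space P. 0 < f \<omega>} \<le> (\<integral>\<^sup>+\<omega>. ennreal (exp (f \<omega>)) \<partial>P)"
proof -
  have "emeasure P {\<omega>\<in>space P. 0 < f \<omega>} = (\<integral>\<^sup>+\<omega>. indicator {\<omega>\<in>space P. 0 < f \<omega>} \<omega> \<partial>P)"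
    by simp
  also have "\<dots> \<le> (\<integral>\<^sup>+\<omega>. ennreal (exp (f \<omega>)) \<partial>P)"
    by (intro nn_integral_mono) (auto split: split_indicator)
  finally show ?thesis .
qed

lemma sqrt_two_power_le_exp: "sqrt 2 ^ n \<le> exp (real n / 2)"
proof -
  have "sqrt 2 \<le> sqrt (exp 1)"
    using exp_ge_add_one_self[of 1] by (simp add: real_sqrt_le_iff)
  also have "\<dots> = sqrt ((exp (1 / 2))\<^sup>2)" by (simp add: power2_eq_square flip: exp_add)
  finally have "sqrt 2 ^ n \<le> exp (1 / 2) ^ n" by (intro power_mono) auto
  then show ?thesis by (simp add: exp_of_nat_mult[symmetric])
qed

lemma subgaussian_projection_tail:
  fixes \<xi> :: "'a \<Rightarrow> real^'n" and A :: "real^'n^'n"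
  assumes P: "prob_space P" and [measurable]: "\<xi> \<in> borel_measurable P" and sg: "subgaussian P \<xi> K"
    and "K > 0" and sym: "transpose A = A" and idem: "A ** A = A"
  shows "emeasure P {\<omega>\<in>space P. 4 * K\<^sup>2 * t < (norm (A *v \<xi> \<omega>))\<^sup>2} \<le> ennreal (exp (trace A / 2 - t))"
proof -
  obtain B where B: "finite B" "pairwise orthogonal B" "\<forall>u\<in>B. norm u = 1"
    and expansion: "\<And>z. A *v z = (\<Sum>u\<in>B. (u \<bullet> z) *\<^sub>R u)"
    using projection_matrix_orthonormal_expansion[OF sym idem] by blast
  have norm_sq: "(norm (A *v z))\<^sup>2 = (\<Sum>u\<in>B. (u \<bullet> z)\<^sup>2)" for z
    unfolding inner_projection_matrix[OF sym idem, symmetric]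
    by (simp add: expansion inner_sum_right power2_eq_square inner_commute)
  define l where "l = 1 / (4 * K\<^sup>2)"
  have "0 \<le> l" and "1 - 2 * l * K\<^sup>2 = 1 / 2" using \<open>K > 0\<close> by (auto simp: l_def)
  have [measurable]: "(\<lambda>\<omega>. \<Sum>u\<in>B. (u \<bullet> \<xi> \<omega>)\<^sup>2) \<in> borel_measurable P" by measurable
  have "{\<omega>\<in>space P. 4 * K\<^sup>2 * t < (norm (A *v \<xi> \<omega>))\<^sup>2}
      = {\<omega>\<in>space P. 0 < l * (\<Sum>u\<in>B. (u \<bullet> \<xi> \<omega>)\<^sup>2) - t}"
    using \<open>K > 0\<close> by (auto simp: norm_sq l_def field_simps)
  also have "emeasure P \<dots> \<le> (\<integral>\<^sup>+\<omega>. ennreal (exp (l * (\<Sum>u\<in>B. (u \<bullet> \<xi> \<omega>)\<^sup>2) - t)) \<partial>P)"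
    by (rule emeasure_pos_le_nn_integral_exp) measurable
  also have "\<dots> = ennreal (exp (- t)) * (\<integral>\<^sup>+\<omega>. ennreal (exp (l * (\<Sum>u\<in>B. (u \<bullet> \<xi> \<omega>)\<^sup>2) + 0 \<bullet> \<xi> \<omega>)) \<partial>P)"
    by (subst nn_integral_cmult[symmetric]) (auto simp: ennreal_mult[symmetric] exp_add[symmetric])
  also have "\<dots> \<le> ennreal (exp (- t)) * ennreal (sqrt 2 ^ card B)"
    using subgaussian_nn_integral_exp_sum_squares[OF P _ sg \<open>0 \<le> l\<close> _ B, of 0] \<open>1 - 2 * l * K\<^sup>2 = 1 / 2\<close>
    by (intro mult_left_mono) (simp_all add: real_sqrt_divide orthogonal_def)
  also have "\<dots> \<le> ennreal (exp (- t) * exp (trace A / 2))"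
    using sqrt_two_power_le_exp[of "card B"]
    by (simp add: trace_eq_card_orthonormal_expansion[OF B(1,3) expansion] flip: ennreal_mult)
  also have "\<dots> = ennreal (exp (trace A / 2 - t))" by (simp add: mult_exp_exp)
  finally show ?thesis .
qed

lemma subgaussian_linear_tail:
  fixes \<xi> :: "'a \<Rightarrow> real^'n"
  assumes [measurable]: "\<xi> \<in> borel_measurable P" and sg: "subgaussian P \<xi> K" and "K > 0"
  shows "emeasure P {\<omega>\<in>space P. 16 * K\<^sup>2 * t < 2 * (\<xi> \<omega> \<bullet> d) - (norm d)\<^sup>2 / 8} \<le> ennreal (exp (- t))"
proof -
  define a where "a = (1 / (8 * K\<^sup>2)) *\<^sub>R d"
  define c where "c = - (norm d)\<^sup>2 / (128 * K\<^sup>2) - t"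
  have "{\<omega>\<in>space P. 16 * K\<^sup>2 * t < 2 * (\<xi> \<omega> \<bullet> d) - (norm d)\<^sup>2 / 8} = {\<omega>\<in>space P. 0 < c + a \<bullet> \<xi> \<omega>}"
    using \<open>K > 0\<close> by (auto simp: a_def c_def field_simps inner_commute)
  also have "emeasure P \<dots> \<le> (\<integral>\<^sup>+\<omega>. ennreal (exp (c + a \<bullet> \<xi> \<omega>)) \<partial>P)"
    by (rule emeasure_pos_le_nn_integral_exp) measurable
  also have "\<dots> = ennreal (exp c) * (\<integral>\<^sup>+\<omega>. ennreal (exp (a \<bullet> \<xi> \<omega>)) \<partial>P)"
    by (subst nn_integral_cmult[symmetric]) (auto simp: ennreal_mult[symmetric] exp_add)
  also have "\<dots> \<le> ennreal (exp c) * ennreal (exp ((norm a)\<^sup>2 * K\<^sup>2 / 2))"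
    using sg unfolding subgaussian_def by (intro mult_left_mono) auto
  also have "\<dots> = ennreal (exp (- t))"
  proof -
    have "(norm a)\<^sup>2 = (norm d)\<^sup>2 / (64 * K\<^sup>2 * K\<^sup>2)"
      using \<open>K > 0\<close> by (simp add: a_def power_divide power_mult_distrib field_simps)
    then have "c + (norm a)\<^sup>2 * K\<^sup>2 / 2 = - t" using \<open>K > 0\<close> by (simp add: c_def field_simps)
    then show ?thesis by (simp add: ennreal_mult[symmetric] exp_add[symmetric])
  qed
  finally show ?thesis .
qed

lemma (in finite_measure) measure_UN_le_weighted:
  assumes "finite I" "\<And>i. i \<in> I \<Longrightarrow> B i \<in> sets M"
    and "\<And>i. i \<in> I \<Longrightarrow> measure M (B i) \<le> w i * e" and "(\<Sum>i\<in>I. w i) = 1"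
  shows "measure M (\<Union>i\<in>I. B i) \<le> e"
proof -
  have "measure M (\<Union>i\<in>I. B i) \<le> (\<Sum>i\<in>I. measure M (B i))"
    using assms(1,2) by (intro finite_measure_subadditive_finite) auto
  also have "\<dots> \<le> (\<Sum>i\<in>I. w i * e)" using assms(3) by (rule sum_mono)
  finally show ?thesis by (simp add: assms(4) flip: sum_distrib_right)
qed

lemma exp_minus_ln_inverse: "0 < p \<Longrightarrow> exp (- ln (1 / p)) = (p :: real)"
  by (simp add: ln_div)

lemma projection_deviation_event:
  fixes \<xi> :: "'a \<Rightarrow> real^'n" and A :: "real^'n^'n" and p x :: real
  assumes "prob_space P" and [measurable]: "\<xi> \<in> borel_measurable P" and "subgaussian P \<xi> K" and "K > 0"
    and "transpose A = A" "A ** A = A" and "0 < p" and "trace A \<le> ln (1 / p)"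
  defines "E \<equiv> {\<omega>\<in>space P. 4 * K\<^sup>2 * (3 / 2 * ln (1 / p) + x) < (norm (A *v \<xi> \<omega>))\<^sup>2}"
  shows "E \<in> sets P" and "measure P E \<le> p * exp (- x)"
proof -
  interpret prob_space P by fact
  have [measurable]: "(\<lambda>\<omega>. (norm (A *v \<xi> \<omega>))\<^sup>2) \<in> borel_measurable P"
    by (rule borel_measurable_continuous_on[OF _ \<open>\<xi> \<in> borel_measurable P\<close>])
      (intro continuous_intros linear_continuous_on matrix_vector_mul_bounded_linear)
  show "E \<in> sets P" unfolding E_def by measurable
  have "emeasure P E \<le> ennreal (exp (trace A / 2 - (3 / 2 * ln (1 / p) + x)))"
    unfolding E_def by (intro subgaussian_projection_tail assms)
  also have "\<dots> \<le> ennreal (exp (- ln (1 / p) - x))"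
    using \<open>trace A \<le> ln (1 / p)\<close> by (intro ennreal_leI) simp
  also have "exp (- ln (1 / p) - x) = p * exp (- x)"
    using \<open>0 < p\<close> by (simp add: exp_diff exp_minus_ln_inverse exp_minus divide_inverse)
  finally show "measure P E \<le> p * exp (- x)"
    using \<open>0 < p\<close> by (simp add: emeasure_eq_measure ennreal_le_iff)
qed

lemma linear_deviation_event:
  fixes \<xi> :: "'a \<Rightarrow> real^'n" and d :: "real^'n" and p q x :: real
  assumes "prob_space P" and [measurable]: "\<xi> \<in> borel_measurable P" and "subgaussian P \<xi> K" and "K > 0"
    and "0 < p" "0 < q"
  defines "E \<equiv> {\<omega>\<in>space P. 16 * K\<^sup>2 * (ln (1 / p) + ln (1 / q) + x) < 2 * (\<xi> \<omega> \<bullet> d) - (norm d)\<^sup>2 / 8}"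
  shows "E \<in> sets P" and "measure P E \<le> p * q * exp (- x)"
proof -
  interpret prob_space P by fact
  show "E \<in> sets P" unfolding E_def by measurable
  have "emeasure P E \<le> ennreal (exp (- (ln (1 / p) + ln (1 / q) + x)))"
    unfolding E_def by (intro subgaussian_linear_tail assms)
  also have "exp (- (ln (1 / p) + ln (1 / q) + x)) = exp (- ln (1 / p)) * exp (- ln (1 / q)) * exp (- x)"
    by (simp flip: exp_add)
  also have "\<dots> = p * q * exp (- x)" using assms(5,6) by (simp add: exp_minus_ln_inverse)
  finally show "measure P E \<le> p * q * exp (- x)"
    using assms(5,6) by (simp add: emeasure_eq_measure ennreal_le_iff)
qed

text \<open>The weights \<open>\<pi> j\<close> and \<open>\<pi> j * \<pi> k\<close> sum to one, so the factors \<open>\<pi>\<close> gained from the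
  thresholds \<open>ln (1 / \<pi> j)\<close> pay for the number of events.\<close>
lemma prob_projection_deviation_le:
  fixes \<xi> :: "'a \<Rightarrow> real^'n" and A :: "nat \<Rightarrow> real^'n^'n" and \<pi> :: "nat \<Rightarrow> real" and x :: real
  assumes "prob_space P" and "\<xi> \<in> borel_measurable P" and "subgaussian P \<xi> K" and "K > 0"
    and "finite I" and "(\<Sum>j\<in>I. \<pi> j) = 1" and "\<And>j. j \<in> I \<Longrightarrow> 0 < \<pi> j"
    and "\<And>j. j \<in> I \<Longrightarrow> transpose (A j) = A j \<and> A j ** A j = A j"
    and "\<And>j. j \<in> I \<Longrightarrow> trace (A j) \<le> ln (1 / \<pi> j)"
  defines "E \<equiv> \<Union>j\<in>I. {\<omega>\<in>space P. 4 * K\<^sup>2 * (3 / 2 * ln (1 / \<pi> j) + x) < (norm (A j *v \<xi> \<omega>))\<^sup>2}"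
  shows "E \<in> sets P" and "measure P E \<le> exp (- x)"
proof -
  let ?E = "\<lambda>j. {\<omega>\<in>space P. 4 * K\<^sup>2 * (3 / 2 * ln (1 / \<pi> j) + x) < (norm (A j *v \<xi> \<omega>))\<^sup>2}"
  have sets: "?E j \<in> sets P" and bound: "measure P (?E j) \<le> \<pi> j * exp (- x)" if "j \<in> I" for j
  proof -
    have "transpose (A j) = A j" "A j ** A j = A j" using assms(8)[OF that] by simp_all
    note event = projection_deviation_event[OF assms(1-4) this assms(7)[OF that] assms(9)[OF that]]
    show "?E j \<in> sets P" by (rule event(1))
    show "measure P (?E j) \<le> \<pi> j * exp (- x)" by (rule event(2))
  qed
  show "E \<in> sets P" unfolding E_def using assms(5) sets by (rule sets.finite_UN)
  show "measure P E \<le> exp (- x)" unfolding E_def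
    by (rule finite_measure.measure_UN_le_weighted[OF prob_space.axioms(1)[OF assms(1)] assms(5)
          sets bound assms(6)])
qed

lemma prob_linear_deviation_le:
  fixes \<xi> :: "'a \<Rightarrow> real^'n" and d :: "nat \<Rightarrow> nat \<Rightarrow> real^'n" and \<pi> :: "nat \<Rightarrow> real" and x :: real
  assumes "prob_space P" and "\<xi> \<in> borel_measurable P" and "subgaussian P \<xi> K" and "K > 0"
    and "finite I" and "(\<Sum>j\<in>I. \<pi> j) = 1" and "\<And>j. j \<in> I \<Longrightarrow> 0 < \<pi> j"
  defines "E \<equiv> \<Union>(j, k)\<in>I \<times> I. {\<omega>\<in>space P.
      16 * K\<^sup>2 * (ln (1 / \<pi> j) + ln (1 / \<pi> k) + x) < 2 * (\<xi> \<omega> \<bullet> d j k) - (norm (d j k))\<^sup>2 / 8}"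
  shows "E \<in> sets P" and "measure P E \<le> exp (- x)"
proof -
  let ?E = "\<lambda>(j, k). {\<omega>\<in>space P.
      16 * K\<^sup>2 * (ln (1 / \<pi> j) + ln (1 / \<pi> k) + x) < 2 * (\<xi> \<omega> \<bullet> d j k) - (norm (d j k))\<^sup>2 / 8}"
  have sets: "?E jk \<in> sets P" and bound: "measure P (?E jk) \<le> (\<lambda>(j, k). \<pi> j * \<pi> k) jk * exp (- x)"
    if jk_in: "jk \<in> I \<times> I" for jk
  proof -
    obtain j k where jk: "jk = (j, k)" "j \<in> I" "k \<in> I" using jk_in by blast
    note event = linear_deviation_event[where d = "d j k" and x = x,
        OF assms(1-4) assms(7)[OF jk(2)] assms(7)[OF jk(3)]]
    show "?E jk \<in> sets P" unfolding jk(1) prod.case by (rule event(1))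
    show "measure P (?E jk) \<le> (\<lambda>(j, k). \<pi> j * \<pi> k) jk * exp (- x)"
      unfolding jk(1) prod.case by (rule event(2))
  qed
  have "finite (I \<times> I)" using assms(5) by simp
  then show "E \<in> sets P" unfolding E_def using sets by (rule sets.finite_UN)
  have weights: "(\<Sum>jk\<in>I \<times> I. (\<lambda>(j, k). \<pi> j * \<pi> k) jk) = 1"
    using assms(6) by (simp add: sum.cartesian_product[symmetric] sum_product[symmetric])
  show "measure P E \<le> exp (- x)" unfolding E_def
    using finite_measure.measure_UN_le_weighted[OF prob_space.axioms(1)[OF assms(1)] \<open>finite (I \<times> I)\<close>
        sets bound weights] .
qed

section \<open>The aggregation criterion\<close>

lemma matrix_vector_mult_sum_scaleR:
  "finite S \<Longrightarrow> (\<Sum>j\<in>S. c j *\<^sub>R (B j :: real^'n^'m)) *v y = (\<Sum>j\<in>S. c j *\<^sub>R (B j *v y))"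
  by (induction S rule: finite_induct) (auto simp: matrix_vector_mult_add_rdistrib scaleR_matrix_vector_assoc)

lemma mu_theta_eq_sum: "mu_theta M A b y \<theta> = (\<Sum>j=1..M. \<theta> j *\<^sub>R mu_hat A b y j)"
  unfolding mu_theta_def A_theta_def b_theta_def mu_hat_def
  by (simp add: matrix_vector_mult_sum_scaleR scaleR_add_right sum.distrib)

lemma inner_mu_theta: "v \<bullet> mu_theta M A b y \<theta> = (\<Sum>j=1..M. \<theta> j * (v \<bullet> mu_hat A b y j))"
  by (simp add: mu_theta_eq_sum inner_sum_right)

text \<open>\<open>pen\<close> is the \<open>\<theta>\<close>-variance of the \<open>mu_hat j\<close>; this is the bias--variance decomposition.\<close>
lemma pen_add_norm_sq:
  assumes "(\<Sum>j=1..M. \<theta> j) = 1"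
  shows "(\<Sum>j=1..M. \<theta> j * (norm (mu_hat A b y j - v))\<^sup>2) = pen M A b y \<theta> + (norm (mu_theta M A b y \<theta> - v))\<^sup>2"
proof -
  let ?m = "mu_theta M A b y \<theta>" and ?\<mu> = "mu_hat A b y"
  have "(\<Sum>j=1..M. \<theta> j * (norm (?\<mu> j - v))\<^sup>2)
      = (\<Sum>j=1..M. \<theta> j * (norm (?\<mu> j - ?m))\<^sup>2) + 2 * (\<Sum>j=1..M. \<theta> j * ((?m - v) \<bullet> ?\<mu> j))
        - 2 * ((?m - v) \<bullet> ?m) * (\<Sum>j=1..M. \<theta> j) + (norm (?m - v))\<^sup>2 * (\<Sum>j=1..M. \<theta> j)"
    by (simp add: power2_norm_eq_inner inner_diff_left inner_diff_right inner_commute algebra_simps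
        sum.distrib sum_subtractf sum_distrib_left sum_distrib_right)
  also have "\<dots> = pen M A b y \<theta> + (norm (?m - v))\<^sup>2"
    unfolding assms inner_mu_theta[symmetric] by (simp add: pen_def norm_minus_commute)
  finally show ?thesis .
qed

lemma pen_nonneg: "\<theta> \<in> Lsimplex M \<Longrightarrow> 0 \<le> pen M A b y \<theta>"
  unfolding pen_def Lsimplex_def by (auto intro: sum_nonneg)

lemma U_eq_half_norm_sq_add_linear:
  assumes "(\<Sum>j=1..M. \<theta> j) = 1"
  shows "U M A b \<pi> Kh y \<theta> = (norm (mu_theta M A b y \<theta>))\<^sup>2 / 2 +
    (\<Sum>j=1..M. \<theta> j * ((norm (mu_hat A b y j))\<^sup>2 / 2 - 2 * (y \<bullet> mu_hat A b y j) + 32 * Kh\<^sup>2 * ln (1 / \<pi> j)))"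
proof -
  have "pen M A b y \<theta> = (\<Sum>j=1..M. \<theta> j * (norm (mu_hat A b y j))\<^sup>2) - (norm (mu_theta M A b y \<theta>))\<^sup>2"
    using pen_add_norm_sq[OF assms, of A b y 0] by simp
  moreover have "(\<Sum>j=1..M. \<theta> j * ((norm (mu_hat A b y j))\<^sup>2 / 2 - 2 * (y \<bullet> mu_hat A b y j) + 32 * Kh\<^sup>2 * ln (1 / \<pi> j)))
    = (\<Sum>j=1..M. \<theta> j * (norm (mu_hat A b y j))\<^sup>2) / 2 - 2 * (\<Sum>j=1..M. \<theta> j * (y \<bullet> mu_hat A b y j))
      + 32 * Kh\<^sup>2 * (\<Sum>j=1..M. \<theta> j * ln (1 / \<pi> j))"
    unfolding sum_divide_distrib sum_distrib_left sum_subtractf[symmetric] sum.distrib[symmetric]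
    by (intro sum.cong) (auto simp: algebra_simps)
  ultimately show ?thesis by (simp add: U_def inner_mu_theta diff_divide_distrib)
qed

lemma U_convex_combination:
  fixes A :: "nat \<Rightarrow> real^'n^'n" and b :: "nat \<Rightarrow> real^'n" and y :: "real^'n"
  assumes "(\<Sum>j=1..M. \<theta> j) = 1" and "(\<Sum>j=1..M. \<theta>' j) = 1"
  defines "D \<equiv> (norm (mu_theta M A b y \<theta>' - mu_theta M A b y \<theta>))\<^sup>2"
  shows "U M A b \<pi> Kh y (\<lambda>j. (1 - t) * \<theta> j + t * \<theta>' j)
    = U M A b \<pi> Kh y \<theta> + t * (U M A b \<pi> Kh y \<theta>' - U M A b \<pi> Kh y \<theta> - D / 2) + t\<^sup>2 * D / 2"
proof -
  let ?m = "mu_theta M A b y \<theta>" and ?m' = "mu_theta M A b y \<theta>'"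
  let ?\<theta>t = "\<lambda>j. (1 - t) * \<theta> j + t * \<theta>' j"
  define lin where "lin \<theta> = (\<Sum>j=1..M. \<theta> j * ((norm (mu_hat A b y j))\<^sup>2 / 2 - 2 * (y \<bullet> mu_hat A b y j)
    + 32 * Kh\<^sup>2 * ln (1 / \<pi> j)))" for \<theta>
  have U_eq: "U M A b \<pi> Kh y \<theta> = (norm (mu_theta M A b y \<theta>))\<^sup>2 / 2 + lin \<theta>" if "(\<Sum>j=1..M. \<theta> j) = 1" for \<theta>
    using U_eq_half_norm_sq_add_linear[OF that] by (simp add: lin_def)
  have sum_t: "(\<Sum>j=1..M. ?\<theta>t j) = 1"
    using assms(1,2) by (simp add: sum.distrib flip: sum_distrib_left)
  have mu_t: "mu_theta M A b y ?\<theta>t = (1 - t) *\<^sub>R ?m + t *\<^sub>R ?m'"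
    by (simp add: mu_theta_eq_sum scaleR_add_left sum.distrib scaleR_sum_right)
  have lin_t: "lin ?\<theta>t = (1 - t) * lin \<theta> + t * lin \<theta>'"
    unfolding lin_def sum_distrib_left sum.distrib[symmetric] by (intro sum.cong) (auto simp: field_simps)
  have "U M A b \<pi> Kh y ?\<theta>t = (norm ((1 - t) *\<^sub>R ?m + t *\<^sub>R ?m'))\<^sup>2 / 2 + ((1 - t) * lin \<theta> + t * lin \<theta>')"
    by (simp only: U_eq[OF sum_t] mu_t lin_t)
  also have "\<dots> = U M A b \<pi> Kh y \<theta> + t * (U M A b \<pi> Kh y \<theta>' - U M A b \<pi> Kh y \<theta> - D / 2) + t\<^sup>2 * D / 2"
    unfolding U_eq[OF assms(1)] U_eq[OF assms(2)] D_def power2_norm_eq_inner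
    by (simp add: inner_add_left inner_add_right inner_diff_left inner_diff_right inner_commute
        power2_eq_square field_simps)
  finally show ?thesis .
qed

lemma nonneg_if_quadratic_nonneg_near_zero:
  fixes a D :: real
  assumes "D \<ge> 0" and q: "\<And>t. 0 < t \<Longrightarrow> t \<le> 1 \<Longrightarrow> 0 \<le> t * a + t\<^sup>2 * D / 2"
  shows "a \<ge> 0"
proof (rule ccontr)
  assume "\<not> a \<ge> 0"
  define t where "t = min 1 (- a / (D + 1))"
  have "0 < t" "t \<le> 1" using \<open>\<not> a \<ge> 0\<close> \<open>D \<ge> 0\<close> by (auto simp: t_def divide_neg_pos)
  have "t * D \<le> t * (D + 1)" using \<open>0 < t\<close> by simp
  also have "\<dots> \<le> - a"
    using \<open>D \<ge> 0\<close> pos_le_divide_eq[of "D + 1" t "- a"] by (simp add: t_def)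
  finally have "t * D \<le> - a" .
  then have "t * (t * D) \<le> t * (- a)"
    using \<open>0 < t\<close> by (intro mult_left_mono) auto
  then have "t\<^sup>2 * D / 2 \<le> t * (- a) / 2" by (simp add: power2_eq_square mult.assoc)
  moreover have "t * a < 0" using \<open>0 < t\<close> \<open>\<not> a \<ge> 0\<close> by (simp add: mult_pos_neg)
  ultimately have "t * a + t\<^sup>2 * D / 2 < 0" by simp
  then show False using q[OF \<open>0 < t\<close> \<open>t \<le> 1\<close>] by simp
qed

lemma Lsimplex_convex_combination:
  assumes "\<theta> \<in> Lsimplex M" "\<theta>' \<in> Lsimplex M" "0 \<le> t" "t \<le> 1"
  shows "(\<lambda>j. (1 - t) * \<theta> j + t * \<theta>' j) \<in> Lsimplex M"
  using assms by (auto simp: Lsimplex_def sum.distrib simp flip: sum_distrib_left)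

lemma U_minimizer_gap:
  fixes A :: "nat \<Rightarrow> real^'n^'n" and b :: "nat \<Rightarrow> real^'n" and y :: "real^'n"
  assumes "\<theta> \<in> Lsimplex M" "\<theta>' \<in> Lsimplex M"
    and opt: "\<And>\<eta>. \<eta> \<in> Lsimplex M \<Longrightarrow> U M A b \<pi> Kh y \<theta> \<le> U M A b \<pi> Kh y \<eta>"
  shows "U M A b \<pi> Kh y \<theta> + (norm (mu_theta M A b y \<theta>' - mu_theta M A b y \<theta>))\<^sup>2 / 2 \<le> U M A b \<pi> Kh y \<theta>'"
proof -
  define D where "D = (norm (mu_theta M A b y \<theta>' - mu_theta M A b y \<theta>))\<^sup>2"
  define a where "a = U M A b \<pi> Kh y \<theta>' - U M A b \<pi> Kh y \<theta> - D / 2"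
  have "0 \<le> D" by (simp add: D_def)
  moreover have "0 \<le> t * a + t\<^sup>2 * D / 2" if "0 < t" "t \<le> 1" for t
  proof -
    have "U M A b \<pi> Kh y \<theta> \<le> U M A b \<pi> Kh y (\<lambda>j. (1 - t) * \<theta> j + t * \<theta>' j)"
      using that by (intro opt Lsimplex_convex_combination[OF assms(1,2)]) auto
    moreover have "(\<Sum>j=1..M. \<theta> j) = 1" "(\<Sum>j=1..M. \<theta>' j) = 1"
      using assms(1,2) by (simp_all add: Lsimplex_def)
    ultimately show ?thesis
      by (simp add: U_convex_combination a_def D_def)
  qed
  ultimately have "a \<ge> 0" by (rule nonneg_if_quadratic_nonneg_near_zero)
  then show ?thesis by (simp add: a_def D_def)
qed

definition simplex_vertex :: "nat \<Rightarrow> nat \<Rightarrow> real" where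
  "simplex_vertex k j = (if j = k then 1 else 0)"

lemma simplex_vertex_in_Lsimplex: "k \<in> {1..M} \<Longrightarrow> simplex_vertex k \<in> Lsimplex M"
  by (simp add: Lsimplex_def simplex_vertex_def)

lemma sum_simplex_vertex:
  fixes g :: "nat \<Rightarrow> 'a::real_vector"
  assumes "k \<in> {1..M}"
  shows "(\<Sum>j=1..M. simplex_vertex k j *\<^sub>R g j) = g k"
proof -
  have "(\<Sum>j=1..M. simplex_vertex k j *\<^sub>R g j) = (\<Sum>j=1..M. if j = k then g j else 0)"
    by (intro sum.cong) (auto simp: simplex_vertex_def)
  then show ?thesis using assms by simp
qed

lemma mu_theta_simplex_vertex: "k \<in> {1..M} \<Longrightarrow> mu_theta M A b y (simplex_vertex k) = mu_hat A b y k"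
  unfolding mu_theta_eq_sum by (rule sum_simplex_vertex)

lemma U_simplex_vertex:
  assumes "k \<in> {1..M}"
  shows "U M A b \<pi> Kh y (simplex_vertex k)
    = (norm (mu_hat A b y k))\<^sup>2 - 2 * (y \<bullet> mu_hat A b y k) + 32 * Kh\<^sup>2 * ln (1 / \<pi> k)"
  using assms simplex_vertex_in_Lsimplex[OF assms] sum_simplex_vertex[OF assms, where 'a = real]
  by (simp add: U_eq_half_norm_sq_add_linear Lsimplex_def mu_theta_simplex_vertex)

section \<open>Oracle inequality\<close>

lemma oracle_inequality_of_noise_bound:
  fixes A :: "nat \<Rightarrow> real^'n^'n" and b :: "nat \<Rightarrow> real^'n" and f \<xi> :: "real^'n"
  assumes "\<theta> \<in> Lsimplex M" and "k \<in> {1..M}"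
    and opt: "\<And>\<eta>. \<eta> \<in> Lsimplex M \<Longrightarrow> U M A b \<pi> Kh (f + \<xi>) \<theta> \<le> U M A b \<pi> Kh (f + \<xi>) \<eta>"
    and noise: "\<And>j. j \<in> {1..M} \<Longrightarrow> 2 * (\<xi> \<bullet> (mu_hat A b (f + \<xi>) j - mu_hat A b (f + \<xi>) k))
        - (norm (mu_hat A b (f + \<xi>) j - mu_hat A b (f + \<xi>) k))\<^sup>2 / 4
        \<le> 32 * Kh\<^sup>2 * (ln (1 / \<pi> j) + ln (1 / \<pi> k)) + R"
  shows "(norm (mu_theta M A b (f + \<xi>) \<theta> - f))\<^sup>2
    \<le> (norm (mu_hat A b (f + \<xi>) k - f))\<^sup>2 + 64 * Kh\<^sup>2 * ln (1 / \<pi> k) + R"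
proof -
  let ?y = "f + \<xi>"
  let ?m = "mu_theta M A b ?y \<theta>" and ?\<mu> = "mu_hat A b ?y"
  define L where "L j = ln (1 / \<pi> j)" for j
  define SL where "SL = (\<Sum>j=1..M. \<theta> j * L j)"
  define pen\<theta> where "pen\<theta> = pen M A b ?y \<theta>"
  have sum_1: "(\<Sum>j=1..M. \<theta> j) = 1" using \<open>\<theta> \<in> Lsimplex M\<close> by (simp add: Lsimplex_def)
  have "U M A b \<pi> Kh ?y \<theta> + (norm (?\<mu> k - ?m))\<^sup>2 / 2 \<le> U M A b \<pi> Kh ?y (simplex_vertex k)"
    using U_minimizer_gap[OF \<open>\<theta> \<in> Lsimplex M\<close> simplex_vertex_in_Lsimplex[OF \<open>k \<in> {1..M}\<close>] opt]
    by (simp add: mu_theta_simplex_vertex[OF \<open>k \<in> {1..M}\<close>])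
  then have gap: "(norm ?m)\<^sup>2 - 2 * (?y \<bullet> ?m) + pen\<theta> / 2 + 32 * Kh\<^sup>2 * SL + (norm (?\<mu> k - ?m))\<^sup>2 / 2
      \<le> (norm (?\<mu> k))\<^sup>2 - 2 * (?y \<bullet> ?\<mu> k) + 32 * Kh\<^sup>2 * L k"
    unfolding U_simplex_vertex[OF \<open>k \<in> {1..M}\<close>] by (simp add: U_def SL_def L_def pen\<theta>_def)
  have "2 * (\<xi> \<bullet> ?m) - 2 * (\<xi> \<bullet> ?\<mu> k) - (pen\<theta> + (norm (?m - ?\<mu> k))\<^sup>2) / 4
      = 2 * (\<Sum>j=1..M. \<theta> j * (\<xi> \<bullet> ?\<mu> j)) - 2 * (\<xi> \<bullet> ?\<mu> k) * (\<Sum>j=1..M. \<theta> j)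
        - (\<Sum>j=1..M. \<theta> j * (norm (?\<mu> j - ?\<mu> k))\<^sup>2) / 4"
    unfolding pen_add_norm_sq[OF sum_1] sum_1 pen\<theta>_def inner_mu_theta by simp
  also have "\<dots> = (\<Sum>j=1..M. 2 * (\<theta> j * (\<xi> \<bullet> ?\<mu> j)) - 2 * (\<xi> \<bullet> ?\<mu> k) * \<theta> j
      - \<theta> j * (norm (?\<mu> j - ?\<mu> k))\<^sup>2 / 4)"
    by (simp only: sum_subtractf sum_distrib_left sum_divide_distrib)
  also have "\<dots> = (\<Sum>j=1..M. \<theta> j * (2 * (\<xi> \<bullet> (?\<mu> j - ?\<mu> k)) - (norm (?\<mu> j - ?\<mu> k))\<^sup>2 / 4))"
    by (intro sum.cong) (auto simp: inner_diff_right algebra_simps)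
  also have "\<dots> \<le> (\<Sum>j=1..M. \<theta> j * (32 * Kh\<^sup>2 * (L j + L k) + R))"
    using noise \<open>\<theta> \<in> Lsimplex M\<close> by (intro sum_mono mult_left_mono) (auto simp: L_def Lsimplex_def)
  also have "\<dots> = 32 * Kh\<^sup>2 * SL + (32 * Kh\<^sup>2 * L k + R) * (\<Sum>j=1..M. \<theta> j)"
    unfolding SL_def by (simp add: sum.distrib sum_distrib_left sum_distrib_right algebra_simps)
  also have "\<dots> = 32 * Kh\<^sup>2 * SL + 32 * Kh\<^sup>2 * L k + R" unfolding sum_1 by simp
  finally have noise_avg: "2 * (\<xi> \<bullet> ?m) - 2 * (\<xi> \<bullet> ?\<mu> k) - pen\<theta> / 4 - (norm (?m - ?\<mu> k))\<^sup>2 / 4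
      \<le> 32 * Kh\<^sup>2 * SL + 32 * Kh\<^sup>2 * L k + R" by (simp add: add_divide_distrib)
  have "0 \<le> pen\<theta>" unfolding pen\<theta>_def by (rule pen_nonneg[OF \<open>\<theta> \<in> Lsimplex M\<close>])
  moreover have "(norm (?m - f))\<^sup>2 = (norm ?m)\<^sup>2 - 2 * (f \<bullet> ?m) + (norm f)\<^sup>2"
    "(norm (?\<mu> k - f))\<^sup>2 = (norm (?\<mu> k))\<^sup>2 - 2 * (f \<bullet> ?\<mu> k) + (norm f)\<^sup>2"
    "2 * (?y \<bullet> ?m) = 2 * (f \<bullet> ?m) + 2 * (\<xi> \<bullet> ?m)"
    "2 * (?y \<bullet> ?\<mu> k) = 2 * (f \<bullet> ?\<mu> k) + 2 * (\<xi> \<bullet> ?\<mu> k)"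
    "(norm (?\<mu> k - ?m))\<^sup>2 = (norm (?m - ?\<mu> k))\<^sup>2"
    by (simp_all add: power2_norm_eq_inner inner_diff_left inner_diff_right inner_add_left inner_commute
        norm_minus_commute)
  moreover have "0 \<le> (norm (?m - ?\<mu> k))\<^sup>2" "64 * Kh\<^sup>2 * L k = 2 * (32 * Kh\<^sup>2 * L k)" by simp_all
  ultimately show ?thesis
    using gap noise_avg unfolding L_def[symmetric] by linarith
qed

lemma power2_norm_diff_le: "(norm (a - c))\<^sup>2 \<le> 2 * (norm a)\<^sup>2 + 2 * (norm (c :: 'a :: real_inner))\<^sup>2"
proof -
  have "0 \<le> (norm (a + c))\<^sup>2" by simp
  then show ?thesis
    by (simp add: power2_norm_eq_inner inner_add_left inner_add_right inner_diff_left inner_diff_right inner_commute)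
qed

text \<open>Since \<open>A\<^sub>j\<close> is an orthogonal projection, \<open>\<xi> \<bullet> A\<^sub>j \<xi> = \<parallel>A\<^sub>j \<xi>\<parallel>\<^sup>2\<close>: the noise part of
  \<open>mu_hat j - mu_hat k\<close> contributes only quadratic forms, which the negative
  \<open>\<parallel>mu_hat j - mu_hat k\<parallel>\<^sup>2\<close> term absorbs up to \<open>\<parallel>A\<^sub>j \<xi>\<parallel>\<^sup>2\<close>.\<close>
lemma noise_cross_term_le:
  fixes A :: "nat \<Rightarrow> real^'n^'n" and b :: "nat \<Rightarrow> real^'n" and f \<xi> :: "real^'n"
  assumes "transpose (A j) = A j" "A j ** A j = A j" and "transpose (A k) = A k" "A k ** A k = A k"
  defines "d \<equiv> (A j *v f + b j) - (A k *v f + b k)"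
  shows "2 * (\<xi> \<bullet> (mu_hat A b (f + \<xi>) j - mu_hat A b (f + \<xi>) k))
        - (norm (mu_hat A b (f + \<xi>) j - mu_hat A b (f + \<xi>) k))\<^sup>2 / 4
     \<le> (2 * (\<xi> \<bullet> d) - (norm d)\<^sup>2 / 8) + 5 / 2 * (norm (A j *v \<xi>))\<^sup>2"
proof -
  define v where "v = A j *v \<xi> - A k *v \<xi>"
  have diff: "mu_hat A b (f + \<xi>) j - mu_hat A b (f + \<xi>) k = v + d"
    unfolding mu_hat_def v_def d_def by (simp add: matrix_vector_right_distrib algebra_simps)
  have "\<xi> \<bullet> v = (norm (A j *v \<xi>))\<^sup>2 - (norm (A k *v \<xi>))\<^sup>2"
    unfolding v_def inner_diff_right inner_projection_matrix[OF assms(1,2)] inner_projection_matrix[OF assms(3,4)] ..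
  moreover have "(norm d)\<^sup>2 \<le> 2 * (norm (v + d))\<^sup>2 + 2 * (norm v)\<^sup>2"
    using power2_norm_diff_le[of "v + d" v] by simp
  moreover have "(norm v)\<^sup>2 \<le> 2 * (norm (A j *v \<xi>))\<^sup>2 + 2 * (norm (A k *v \<xi>))\<^sup>2"
    unfolding v_def by (rule power2_norm_diff_le)
  moreover have "0 \<le> (norm (A k *v \<xi>))\<^sup>2" by simp
  ultimately show ?thesis unfolding diff inner_add_right distrib_left by linarith
qed

lemma Lsimplex_le_one:
  assumes "\<pi> \<in> Lsimplex M" "j \<in> {1..M}"
  shows "\<pi> j \<le> 1"
proof -
  have "\<pi> j \<le> (\<Sum>i=1..M. \<pi> i)" using assms by (intro member_le_sum) (auto simp: Lsimplex_def)
  then show ?thesis using assms(1) by (simp add: Lsimplex_def)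
qed

lemma oracle_inequality_on_good_event:
  fixes A :: "nat \<Rightarrow> real^'n^'n" and b :: "nat \<Rightarrow> real^'n" and f \<xi> :: "real^'n"
  assumes "1 \<le> M"
    and proj: "\<And>j. j \<in> {1..M} \<Longrightarrow> transpose (A j) = A j \<and> A j ** A j = A j"
    and "\<pi> \<in> Lsimplex M" and "\<And>j. j \<in> {1..M} \<Longrightarrow> 0 < \<pi> j"
    and "\<theta> \<in> Lsimplex M"
    and opt: "\<And>\<eta>. \<eta> \<in> Lsimplex M \<Longrightarrow> U M A b \<pi> Kh (f + \<xi>) \<theta> \<le> U M A b \<pi> Kh (f + \<xi>) \<eta>"
    and "K\<^sup>2 \<le> Kh\<^sup>2" and "0 \<le> x"
    and quadratic: "\<And>j. j \<in> {1..M} \<Longrightarrow> (norm (A j *v \<xi>))\<^sup>2 \<le> 4 * K\<^sup>2 * (3 / 2 * ln (1 / \<pi> j) + x)"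
    and linear: "\<And>j k. j \<in> {1..M} \<Longrightarrow> k \<in> {1..M} \<Longrightarrow>
      2 * (\<xi> \<bullet> ((A j *v f + b j) - (A k *v f + b k))) - (norm ((A j *v f + b j) - (A k *v f + b k)))\<^sup>2 / 8
        \<le> 16 * K\<^sup>2 * (ln (1 / \<pi> j) + ln (1 / \<pi> k) + x)"
  shows "(norm (mu_theta M A b (f + \<xi>) \<theta> - f))\<^sup>2 \<le>
    (MIN j\<in>{1..M}. (norm (mu_hat A b (f + \<xi>) j - f))\<^sup>2 + 64 * Kh\<^sup>2 * ln (1 / \<pi> j)) + 28 * K\<^sup>2 * x"
proof -
  define L where "L j = ln (1 / \<pi> j)" for j
  have L_nonneg: "0 \<le> L j" if "j \<in> {1..M}" for j
    using assms(4)[OF that] Lsimplex_le_one[OF assms(3) that] by (simp add: L_def)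
  let ?risk = "\<lambda>j. (norm (mu_hat A b (f + \<xi>) j - f))\<^sup>2 + 64 * Kh\<^sup>2 * ln (1 / \<pi> j)"
  have each: "(norm (mu_theta M A b (f + \<xi>) \<theta> - f))\<^sup>2 \<le> ?risk k + 28 * K\<^sup>2 * x" if k: "k \<in> {1..M}" for k
  proof (rule oracle_inequality_of_noise_bound[OF \<open>\<theta> \<in> Lsimplex M\<close> k opt])
    fix j assume j: "j \<in> {1..M}"
    have "2 * (\<xi> \<bullet> (mu_hat A b (f + \<xi>) j - mu_hat A b (f + \<xi>) k))
        - (norm (mu_hat A b (f + \<xi>) j - mu_hat A b (f + \<xi>) k))\<^sup>2 / 4
      \<le> 16 * K\<^sup>2 * (L j + L k + x) + 5 / 2 * (4 * K\<^sup>2 * (3 / 2 * L j + x))"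
      using noise_cross_term_le[of A j k \<xi> b f] proj[OF j] proj[OF k] linear[OF j k] quadratic[OF j]
      unfolding L_def by linarith
    also have "\<dots> \<le> 32 * K\<^sup>2 * (L j + L k) + 28 * K\<^sup>2 * x"
      using L_nonneg[OF j] L_nonneg[OF k] \<open>0 \<le> x\<close> by (simp add: algebra_simps)
    also have "\<dots> \<le> 32 * Kh\<^sup>2 * (L j + L k) + 28 * K\<^sup>2 * x"
      using \<open>K\<^sup>2 \<le> Kh\<^sup>2\<close> L_nonneg[OF j] L_nonneg[OF k] by (simp add: mult_right_mono)
    finally show "2 * (\<xi> \<bullet> (mu_hat A b (f + \<xi>) j - mu_hat A b (f + \<xi>) k))
        - (norm (mu_hat A b (f + \<xi>) j - mu_hat A b (f + \<xi>) k))\<^sup>2 / 4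
      \<le> 32 * Kh\<^sup>2 * (ln (1 / \<pi> j) + ln (1 / \<pi> k)) + 28 * K\<^sup>2 * x"
      unfolding L_def .
  qed
  have "(MIN j\<in>{1..M}. ?risk j) \<in> ?risk ` {1..M}" using \<open>1 \<le> M\<close> by (intro Min_in) auto
  then obtain k where "k \<in> {1..M}" and "(MIN j\<in>{1..M}. ?risk j) = ?risk k" by blast
  with each show ?thesis by simp
qed

theorem propositionD4:
  fixes P :: "'a measure" and \<xi> :: "'a \<Rightarrow> real^'n" and f :: "real^'n" and K :: real
    and M :: nat and A :: "nat \<Rightarrow> real^'n^'n" and b :: "nat \<Rightarrow> real^'n"
    and \<pi> :: "nat \<Rightarrow> real" and Khat :: "'a \<Rightarrow> real" and \<theta>hat :: "'a \<Rightarrow> nat \<Rightarrow> real"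
    and x :: real
  assumes "prob_space P"
    and "\<xi> \<in> borel_measurable P"
    and "K > 0" and "subgaussian P \<xi> K"
    and "\<And>K'. 0 < K' \<Longrightarrow> K' < K \<Longrightarrow> \<not> subgaussian P \<xi> K'"
    and "M \<ge> 2"
    and "\<And>j. j \<in> {1..M} \<Longrightarrow> transpose (A j) = A j \<and> A j ** A j = A j"
    and "\<pi> \<in> Lsimplex M" and "\<And>j. j \<in> {1..M} \<Longrightarrow> \<pi> j > 0"
    and "\<And>j. j \<in> {1..M} \<Longrightarrow> trace (A j) \<le> ln (1 / \<pi> j)"
    and "Khat \<in> borel_measurable P" and "\<And>\<omega>. Khat \<omega> > 0"
    and "\<And>\<omega>. \<theta>hat \<omega> \<in> Lsimplex M"
    and "\<And>\<omega> \<theta>. \<theta> \<in> Lsimplex M \<Longrightarrow>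
           U M A b \<pi> (Khat \<omega>) (f + \<xi> \<omega>) (\<theta>hat \<omega>) \<le> U M A b \<pi> (Khat \<omega>) (f + \<xi> \<omega>) \<theta>"
    and "x > 0"
  shows "\<exists>E \<in> sets P.
     measure P E \<ge> 1 - measure P {\<omega>\<in>space P. (Khat \<omega>)\<^sup>2 < K\<^sup>2} - 2 * exp (- x) \<and>
     (\<forall>\<omega>\<in>E. (norm (mu_theta M A b (f + \<xi> \<omega>) (\<theta>hat \<omega>) - f))\<^sup>2 \<le>
        (MIN j\<in>{1..M}. (norm (mu_hat A b (f + \<xi> \<omega>) j - f))\<^sup>2 + 64 * (Khat \<omega>)\<^sup>2 * ln (1 / \<pi> j))
        + 28 * K\<^sup>2 * x)"
proof -
  interpret prob_space P by fact
  have weights: "(\<Sum>j\<in>{1..M}. \<pi> j) = 1" using \<open>\<pi> \<in> Lsimplex M\<close> by (simp add: Lsimplex_def)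
  define bad_K where "bad_K = {\<omega>\<in>space P. (Khat \<omega>)\<^sup>2 < K\<^sup>2}"
  define bad_quadratic where "bad_quadratic = (\<Union>j\<in>{1..M}.
    {\<omega>\<in>space P. 4 * K\<^sup>2 * (3 / 2 * ln (1 / \<pi> j) + x) < (norm (A j *v \<xi> \<omega>))\<^sup>2})"
  define bad_linear where "bad_linear = (\<Union>(j, k)\<in>{1..M} \<times> {1..M}. {\<omega>\<in>space P.
    16 * K\<^sup>2 * (ln (1 / \<pi> j) + ln (1 / \<pi> k) + x)
      < 2 * (\<xi> \<omega> \<bullet> ((A j *v f + b j) - (A k *v f + b k))) - (norm ((A j *v f + b j) - (A k *v f + b k)))\<^sup>2 / 8})"
  note quadratic = prob_projection_deviation_le[OF assms(1,2,4,3) finite_atLeastAtMost weights assms(9,7,10), of x,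
      folded bad_quadratic_def]
  note linear = prob_linear_deviation_le[OF assms(1,2,4,3) finite_atLeastAtMost weights assms(9),
      of x "\<lambda>j k. (A j *v f + b j) - (A k *v f + b k)", folded bad_linear_def]
  have "bad_K \<in> sets P" unfolding bad_K_def using \<open>Khat \<in> borel_measurable P\<close> by measurable
  define E where "E = space P - (bad_K \<union> bad_quadratic \<union> bad_linear)"
  have "measure P (bad_K \<union> bad_quadratic \<union> bad_linear) \<le> measure P bad_K + 2 * exp (- x)"
    using measure_Un_le[of "bad_K \<union> bad_quadratic" P bad_linear] measure_Un_le[of bad_K P bad_quadratic]
      \<open>bad_K \<in> sets P\<close> quadratic linear by simp
  then have "measure P E \<ge> 1 - measure P bad_K - 2 * exp (- x)"
    unfolding E_def using \<open>bad_K \<in> sets P\<close> quadratic(1) linear(1) by (subst prob_compl) auto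
  moreover have "E \<in> sets P" unfolding E_def using \<open>bad_K \<in> sets P\<close> quadratic(1) linear(1) by auto
  moreover have "(norm (mu_theta M A b (f + \<xi> \<omega>) (\<theta>hat \<omega>) - f))\<^sup>2 \<le>
      (MIN j\<in>{1..M}. (norm (mu_hat A b (f + \<xi> \<omega>) j - f))\<^sup>2 + 64 * (Khat \<omega>)\<^sup>2 * ln (1 / \<pi> j))
      + 28 * K\<^sup>2 * x" if "\<omega> \<in> E" for \<omega>
    using that \<open>M \<ge> 2\<close> \<open>x > 0\<close>
    by (intro oracle_inequality_on_good_event assms(7-9,13,14))
      (auto simp: E_def bad_K_def bad_quadratic_def bad_linear_def not_less)
  ultimately show ?thesis unfolding bad_K_def by blast
qed

end
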